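(* The matching policies FCFM, LCFM, every random policy (in particular every strict priority policy and the uniform policy U), and Match the Longest (ML) are sub-additive: for all $z',z''\in\mathcal V^*$ and all $\varsigma',\varsigma''\in\mathcal S^*$ whose letters lie in the support of $\nu_\phi$, with $|\varsigma'|=|z'|$, $|\varsigma''|=|z''|$, $$|Q_\phi(z'z'',\varsigma'\varsigma'')|\le|Q_\phi(z',\varsigma')|+|Q_\phi(z'',\varsigma'')|.$$
   Context: $G=(\mathcal V,\mathcal E)$ is a finite connected simple graph, $u - v$ denotes adjacency, $\mathcal E(v)$ the set of neighbours of $v$. A list of preferences $\sigma=(\sigma(i))_{i\in\mathcal V}\in\mathcal S$ gives, for each class $i$, a linear ordering $\sigma(i)$ of $\mathcal E(i)$. Each policy $\phi$ comes with a probability $\nu_\phi$ on $\mathcal S$. The buffer is a word $w\in\mathbb W=\{w\in\mathcal V^*:|w|_i|w|_j=0 \text{ whenever } i - j\}$ of classes of waiting items in arrival order. For $v\in\mathcal V,\sigma\in\mathcal S$, $w\odot_\phi(v,\sigma)=wv$ if no letter of $w$ is adjacent to $v$; otherwise one letter of $w$ adjacent to $v$, chosen by $\phi$, is deleted. For $z=z_1\cdots z_k\in\mathcal V^*$, $\varsigma=\varsigma_1\cdots\varsigma_k\in\mathcal S^*$, $Q_\phi(z,\varsigma)=(\cdots(\emptyset\odot_\phi(z_1,\varsigma_1))\cdots)\odot_\phi(z_k,\varsigma_k)$. Policies: FCFM deletes the leftmost letter of $w$ adjacent to $v$; LCFM deletes the rightmost one. For the other policies the class $j$ of the match is chosen from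 the class detail $x=(|w|_i)_i$ and $\sigma$ among $\mathcal P(x,v)=\{j\in\mathcal E(v):x(j)>0\}$, and the leftmost letter $j$ of $w$ is deleted. Random policy: $j$ is the first element of $\mathcal P(x,v)$ in the order $\sigma(v)$, $\nu_\phi$ arbitrary; strict priority: $\nu_\phi$ a Dirac mass; uniform U: $\nu_\phi$ uniform on $\mathcal S$. ML: $\nu_\phi$ uniform on $\mathcal S$ and $j$ is the first element, in the order $\sigma(v)$, of the set of $j\in\mathcal E(v)$ maximizing $x(j)$ (among those with $x(j)>0$). *)

theory Defs
  imports Main
begin

definition simple_connected_graph :: "'a set \<Rightarrow> ('a \<Rightarrow> 'a \<Rightarrow> bool) \<Rightarrow> bool" where
  "simple_connected_graph V E \<longleftrightarrow>
     finite V \<and> V \<noteq> {} \<and>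
     (\<forall>u v. E u v \<longrightarrow> u \<in> V \<and> v \<in> V) \<and>
     (\<forall>u v. E u v \<longrightarrow> E v u) \<and>
     (\<forall>u. \<not> E u u) \<and>
     (\<forall>u\<in>V. \<forall>v\<in>V. (u, v) \<in> {(x, y). E x y}\<^sup>*)"

definition prefs :: "'a set \<Rightarrow> ('a \<Rightarrow> 'a \<Rightarrow> bool) \<Rightarrow> ('a \<Rightarrow> 'a list) set" where
  "prefs V E = {\<sigma>. (\<forall>i\<in>V. distinct (\<sigma> i) \<and> set (\<sigma> i) = {j. E i j}) \<and> (\<forall>i. i \<notin> V \<longrightarrow> \<sigma> i = [])}"

datatype policy = FCFM | LCFM | RandomPolicy | MatchLongest

fun del_first :: "('a \<Rightarrow> bool) \<Rightarrow> 'a list \<Rightarrow> 'a list" where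
  "del_first P [] = []"
| "del_first P (x # xs) = (if P x then xs else x # del_first P xs)"

definition random_choice :: "'a list \<Rightarrow> 'a \<Rightarrow> ('a \<Rightarrow> 'a list) \<Rightarrow> 'a" where
  "random_choice w v \<sigma> = hd (filter (\<lambda>j. count_list w j > 0) (\<sigma> v))"

definition ml_choice :: "'a list \<Rightarrow> 'a \<Rightarrow> ('a \<Rightarrow> 'a list) \<Rightarrow> 'a" where
  "ml_choice w v \<sigma> =
     (let P = filter (\<lambda>j. count_list w j > 0) (\<sigma> v);
          m = Max (set (map (count_list w) P))
      in hd (filter (\<lambda>j. count_list w j = m) P))"

definition step :: "('a \<Rightarrow> 'a \<Rightarrow> bool) \<Rightarrow> policy \<Rightarrow> 'a list \<Rightarrow> 'a \<Rightarrow> ('a \<Rightarrow> 'a list) \<Rightarrow> 'a list" where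
  "step E \<phi> w v \<sigma> =
     (if \<not> (\<exists>u\<in>set w. E v u) then w @ [v]
      else (case \<phi> of
              FCFM \<Rightarrow> del_first (E v) w
            | LCFM \<Rightarrow> rev (del_first (E v) (rev w))
            | RandomPolicy \<Rightarrow> remove1 (random_choice w v \<sigma>) w
            | MatchLongest \<Rightarrow> remove1 (ml_choice w v \<sigma>) w))"

definition Q :: "('a \<Rightarrow> 'a \<Rightarrow> bool) \<Rightarrow> policy \<Rightarrow> 'a list \<Rightarrow> ('a \<Rightarrow> 'a list) list \<Rightarrow> 'a list" where
  "Q E \<phi> z ss = fold (\<lambda>(v, \<sigma>) w. step E \<phi> w v \<sigma>) (zip z ss) []"

end

theory Submission
  imports Defs "HOL-Library.Multiset"
begin

text \<open>Adding one item to the initial buffer perturbs every later buffer by at most one item.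
  Under FCFM and LCFM the two buffers always differ by the insertion of a single letter: an
  arrival either matches in both (and the two deletions keep the extra letter aligned), or it
  matches only the extra letter, after which the roles of the two buffers are swapped. The other
  policies only see the class detail, and there the two multisets of waiting items differ by one
  element, because the class chosen with the extra item present is either the class chosen
  without it or the class of the extra item. Hence starting from a buffer \<open>w\<close> instead of the
  empty one increases the final length by at most \<open>|w|\<close>; taking \<open>w = Q(z', \<sigma>')\<close> gives
  sub-additivity.\<close>

lemma length_fold_le_of_simulation:
  fixes R :: "'b list \<Rightarrow> 'b list \<Rightarrow> bool"
  assumes preserve: "\<And>p A B. p \<in> set ps \<Longrightarrow> R A B \<Longrightarrow> R (g p A) (g p B)"
    and R_Cons: "\<And>x w. R (x # w) w"
    and R_length: "\<And>A B. R A B \<Longrightarrow> length A \<le> Suc (length B)"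
  shows "length (fold g ps w) \<le> length w + length (fold g ps [])"
proof -
  have fold_R: "R (fold g qs A) (fold g qs B)" if "set qs \<subseteq> set ps" "R A B" for qs A B
    using that by (induction qs arbitrary: A B) (auto intro: preserve)
  show ?thesis
  proof (induction w)
    case (Cons x w)
    have "length (fold g ps (x # w)) \<le> Suc (length (fold g ps w))"
      using R_length fold_R R_Cons by blast
    with Cons.IH show ?case by simp
  qed simp
qed

definition delete_or_append :: "('a list \<Rightarrow> 'a list) \<Rightarrow> ('a \<Rightarrow> bool) \<Rightarrow> 'a \<Rightarrow> 'a list \<Rightarrow> 'a list" where
  "delete_or_append D P v w = (if \<exists>u\<in>set w. P u then D w else w @ [v])"

definition del_last :: "('a \<Rightarrow> bool) \<Rightarrow> 'a list \<Rightarrow> 'a list" where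
  "del_last P w = rev (del_first P (rev w))"

lemma step_FCFM: "step E FCFM w v \<sigma> = delete_or_append (del_first (E v)) (E v) v w"
  and step_LCFM: "step E LCFM w v \<sigma> = delete_or_append (del_last (E v)) (E v) v w"
  and step_RandomPolicy:
    "step E RandomPolicy w v \<sigma> = delete_or_append (\<lambda>w. remove1 (random_choice w v \<sigma>) w) (E v) v w"
  and step_MatchLongest:
    "step E MatchLongest w v \<sigma> = delete_or_append (\<lambda>w. remove1 (ml_choice w v \<sigma>) w) (E v) v w"
  by (simp_all add: step_def delete_or_append_def del_last_def)

subsection \<open>FCFM and LCFM: buffers differing by one letter\<close>

definition one_deletion :: "'a list \<Rightarrow> 'a list \<Rightarrow> bool" where
  "one_deletion A B \<longleftrightarrow> (\<exists>xs x ys. A = xs @ x # ys \<and> B = xs @ ys)"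

definition near_word :: "'a list \<Rightarrow> 'a list \<Rightarrow> bool" where
  "near_word A B \<longleftrightarrow> A = B \<or> one_deletion A B \<or> one_deletion B A"

lemma one_deletion_intro: "one_deletion (xs @ x # ys) (xs @ ys)"
  unfolding one_deletion_def by blast

lemma one_deletion_Cons: "one_deletion (x # w) w"
  using one_deletion_intro[of "[]"] by simp

lemma one_deletion_snoc: "one_deletion (w @ [v]) w"
  unfolding one_deletion_def by blast

lemma one_deletion_append: "one_deletion A B \<Longrightarrow> one_deletion (A @ C) (B @ C)"
  unfolding one_deletion_def by fastforce

lemma one_deletion_rev: "one_deletion A B \<Longrightarrow> one_deletion (rev A) (rev B)"
  unfolding one_deletion_def by (metis rev.simps(2) rev_append append.assoc append_Cons append_Nil)

lemma one_deletion_mset: "one_deletion A B \<Longrightarrow> \<exists>x. mset A = add_mset x (mset B)"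
  unfolding one_deletion_def by auto

lemma one_deletion_del_first: "\<exists>u\<in>set w. P u \<Longrightarrow> one_deletion w (del_first P w)"
proof (induction w)
  case (Cons y w)
  show ?case
  proof (cases "P y")
    case False
    with Cons obtain xs x ys where "w = xs @ x # ys" "del_first P w = xs @ ys"
      unfolding one_deletion_def by auto
    with False show ?thesis
      unfolding one_deletion_def by (auto intro!: exI[of _ "y # xs"])
  qed (simp add: one_deletion_Cons)
qed simp

lemma del_first_append:
  "del_first P (xs @ ys) = (if \<exists>u\<in>set xs. P u then del_first P xs @ ys else xs @ del_first P ys)"
  by (induction xs) auto

lemma one_deletion_del_first_both:
  assumes "one_deletion A B" "\<exists>u\<in>set B. P u"
  shows "one_deletion (del_first P A) (del_first P B)"
proof -
  obtain xs x ys where A: "A = xs @ x # ys" and B: "B = xs @ ys"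
    using assms(1) unfolding one_deletion_def by blast
  consider "\<exists>u\<in>set xs. P u" | "\<not> (\<exists>u\<in>set xs. P u)" "P x" | "\<not> (\<exists>u\<in>set xs. P u)" "\<not> P x"
    by blast
  then show ?thesis
  proof cases
    case 1
    then show ?thesis
      using one_deletion_intro[of "del_first P xs" x ys] by (simp add: A B del_first_append)
  next
    case 2
    with assms(2) B have "\<exists>u\<in>set ys. P u"
      by auto
    then obtain as c bs where ys: "ys = as @ c # bs" "del_first P ys = as @ bs"
      using one_deletion_del_first[of ys P] unfolding one_deletion_def by blast
    with 2 have "del_first P A = (xs @ as) @ c # bs" "del_first P B = (xs @ as) @ bs"
      by (simp_all add: A B del_first_append)
    then show ?thesis
      using one_deletion_intro[of "xs @ as" c bs] by simp
  next
    case 3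
    then show ?thesis
      using one_deletion_intro[of xs x "del_first P ys"] by (simp add: A B del_first_append)
  qed
qed

lemma del_first_eq_of_one_deletion:
  assumes "one_deletion A B" "\<not> (\<exists>u\<in>set B. P u)" "\<exists>u\<in>set A. P u"
  shows "del_first P A = B"
  using assms unfolding one_deletion_def by (auto simp: del_first_append)

lemma one_deletion_del_last_both:
  "one_deletion A B \<Longrightarrow> \<exists>u\<in>set B. P u \<Longrightarrow> one_deletion (del_last P A) (del_last P B)"
  unfolding del_last_def
  by (metis one_deletion_rev one_deletion_del_first_both rev_rev_ident set_rev)

lemma del_last_eq_of_one_deletion:
  "one_deletion A B \<Longrightarrow> \<not> (\<exists>u\<in>set B. P u) \<Longrightarrow> \<exists>u\<in>set A. P u \<Longrightarrow> del_last P A = B"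
  unfolding del_last_def
  using del_first_eq_of_one_deletion[OF one_deletion_rev, of A B P] by simp

lemma near_word_delete_or_append:
  assumes "near_word A B"
    and both: "\<And>A B. one_deletion A B \<Longrightarrow> \<exists>u\<in>set B. P u \<Longrightarrow> one_deletion (D A) (D B)"
    and extra: "\<And>A B. one_deletion A B \<Longrightarrow> \<not> (\<exists>u\<in>set B. P u) \<Longrightarrow> \<exists>u\<in>set A. P u \<Longrightarrow> D A = B"
  shows "near_word (delete_or_append D P v A) (delete_or_append D P v B)"
proof -
  have "near_word (delete_or_append D P v A) (delete_or_append D P v B)" if "one_deletion A B" for A B
  proof -
    have "set B \<subseteq> set A"
      using that unfolding one_deletion_def by auto
    then consider "\<exists>u\<in>set B. P u" | "\<not> (\<exists>u\<in>set B. P u)" "\<exists>u\<in>set A. P u"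
      | "\<not> (\<exists>u\<in>set A. P u)"
      by blast
    then show ?thesis
    proof cases
      case 1
      with \<open>set B \<subseteq> set A\<close> show ?thesis
        using both[OF that 1] by (auto simp: delete_or_append_def near_word_def)
    next
      case 2
      then show ?thesis
        using extra[OF that 2] by (simp add: delete_or_append_def near_word_def one_deletion_snoc)
    next
      case 3
      with \<open>set B \<subseteq> set A\<close> show ?thesis
        using one_deletion_append[OF that] by (auto simp: delete_or_append_def near_word_def)
    qed
  qed
  with \<open>near_word A B\<close> show ?thesis
    unfolding near_word_def by metis
qed

subsection \<open>Policies depending only on the class detail\<close>

definition near_mset :: "'a list \<Rightarrow> 'a list \<Rightarrow> bool" where
  "near_mset A B \<longleftrightarrow>
     mset A = mset B \<or> (\<exists>x. mset A = add_mset x (mset B)) \<or> (\<exists>x. mset B = add_mset x (mset A))"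

lemma near_mset_if_near_word: "near_word A B \<Longrightarrow> near_mset A B"
  unfolding near_word_def near_mset_def using one_deletion_mset by blast

lemma length_le_Suc_if_near_mset: "near_mset A B \<Longrightarrow> length A \<le> Suc (length B)"
  unfolding near_mset_def by (metis size_mset size_add_mset le_SucI order_refl)

lemma near_mset_sym: "near_mset A B \<Longrightarrow> near_mset B A"
  unfolding near_mset_def by auto

lemma near_mset_delete_or_append:
  assumes "near_mset A B"
    and mset_cong: "\<And>A B. mset A = mset B \<Longrightarrow> c A = c B"
    and choice_add: "\<And>A B x. mset A = add_mset x (mset B) \<Longrightarrow> \<exists>u\<in>set B. P u \<Longrightarrow> c A = c B \<or> c A = x"
    and chosen: "\<And>w. \<exists>u\<in>set w. P u \<Longrightarrow> c w \<in> set w \<and> P (c w)"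
  shows "near_mset (delete_or_append (\<lambda>w. remove1 (c w) w) P v A)
                   (delete_or_append (\<lambda>w. remove1 (c w) w) P v B)"
    (is "near_mset (?f A) (?f B)")
proof -
  have add: "near_mset (?f A) (?f B)" if AB: "mset A = add_mset x (mset B)" for A B x
  proof -
    have set_A: "set A = insert x (set B)"
      using arg_cong[OF AB, of set_mset] by simp
    consider "\<exists>u\<in>set B. P u" | "\<not> (\<exists>u\<in>set B. P u)" "\<exists>u\<in>set A. P u"
      | "\<not> (\<exists>u\<in>set A. P u)"
      using set_A by blast
    then show ?thesis
    proof cases
      case 1
      with set_A have A: "\<exists>u\<in>set A. P u"
        by auto
      have "c B \<in># mset B"
        using chosen[OF 1] by simp
      have f: "?f A = remove1 (c A) A" "?f B = remove1 (c B) B"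
        using 1 A by (simp_all add: delete_or_append_def)
      from choice_add[OF AB 1]
      have "mset (?f A) = add_mset x (mset (?f B)) \<or> mset (?f A) = add_mset (c B) (mset (?f B))"
      proof
        assume "c A = c B"
        with \<open>c B \<in># mset B\<close> show ?thesis
          unfolding f by (simp add: AB)
      next
        assume "c A = x"
        with \<open>c B \<in># mset B\<close> show ?thesis
          unfolding f by (simp add: AB insert_DiffM)
      qed
      then show ?thesis
        unfolding near_mset_def by blast
    next
      case 2
      with set_A have "c A = x"
        using chosen[OF 2(2)] by auto
      with 2 AB have "mset (?f B) = add_mset v (mset (?f A))"
        by (simp add: delete_or_append_def)
      then show ?thesis
        unfolding near_mset_def by blast
    next
      case 3
      with set_A AB have "mset (?f A) = add_mset x (mset (?f B))"
        by (simp add: delete_or_append_def)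
      then show ?thesis
        unfolding near_mset_def by blast
    qed
  qed
  from \<open>near_mset A B\<close> consider "mset A = mset B" | x where "mset A = add_mset x (mset B)"
    | x where "mset B = add_mset x (mset A)"
    unfolding near_mset_def by blast
  then show ?thesis
  proof cases
    case 1
    moreover have "set A = set B"
      using 1 by (rule mset_eq_setD)
    ultimately have "mset (?f A) = mset (?f B)"
      using mset_cong[OF 1] by (simp add: delete_or_append_def)
    then show ?thesis
      unfolding near_mset_def by blast
  next
    case 2
    then show ?thesis
      by (rule add)
  next
    case 3
    then show ?thesis
      by (rule near_mset_sym[OF add])
  qed
qed

lemma count_list_eq_if_mset_eq: "mset A = mset B \<Longrightarrow> count_list A = count_list B"
  by (rule ext, drule arg_cong[where f = "\<lambda>M. count M j" for j]) (simp add: count_mset)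

lemma count_list_if_add_mset:
  "mset A = add_mset x (mset B) \<Longrightarrow> count_list A j = count_list B j + (if j = x then 1 else 0)"
  by (drule arg_cong[where f = "\<lambda>M. count M j"]) (auto simp: count_mset)

lemma count_list_pos_iff: "0 < count_list w j \<longleftrightarrow> j \<in> set w"
  using count_list_0_iff[of w j] by auto

lemma hd_filter_mono_insert:
  assumes "\<forall>j\<in>set L. P j \<longrightarrow> P' j" "\<forall>j\<in>set L. P' j \<longrightarrow> P j \<or> j = x" "\<exists>j\<in>set L. P j"
  shows "hd (filter P' L) = hd (filter P L) \<or> hd (filter P' L) = x"
  using assms by (induction L) auto

lemma random_choice_mem:
  assumes "set (\<sigma> v) = {j. E v j}" "\<exists>u\<in>set w. E v u"
  shows "random_choice w v \<sigma> \<in> set w \<and> E v (random_choice w v \<sigma>)"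
proof -
  have "filter (\<lambda>j. count_list w j > 0) (\<sigma> v) \<noteq> []"
    using assms by (auto simp: filter_empty_conv count_list_pos_iff)
  then have "random_choice w v \<sigma> \<in> set (filter (\<lambda>j. count_list w j > 0) (\<sigma> v))"
    unfolding random_choice_def by (rule hd_in_set)
  with assms(1) show ?thesis
    by (auto simp: count_list_pos_iff)
qed

lemma random_choice_add_mset:
  assumes "set (\<sigma> v) = {j. E v j}" "\<exists>u\<in>set B. E v u" "mset A = add_mset x (mset B)"
  shows "random_choice A v \<sigma> = random_choice B v \<sigma> \<or> random_choice A v \<sigma> = x"
  unfolding random_choice_def
  using assms count_list_if_add_mset[OF assms(3)]
  by (intro hd_filter_mono_insert) (auto simp: count_list_pos_iff)

lemma Max_image_positive:
  fixes f :: "'a \<Rightarrow> nat"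
  assumes "finite S" "j \<in> S" "0 < f j"
  shows "Max (f ` {j\<in>S. 0 < f j}) = Max (f ` S)"
proof -
  have "f ` S \<subseteq> insert 0 (f ` {j\<in>S. 0 < f j})"
    by auto
  then have "Max (f ` S) \<le> Max (f ` {j\<in>S. 0 < f j})"
    using assms by (intro Max.boundedI) (auto intro: Max_ge)
  moreover have "Max (f ` {j\<in>S. 0 < f j}) \<le> Max (f ` S)"
    using assms by (intro Max_mono) auto
  ultimately show ?thesis by simp
qed

lemma Max_count_list_pos:
  assumes "finite S" "j \<in> S" "j \<in> set w"
  shows "0 < Max (count_list w ` S)"
proof -
  have "count_list w j \<le> Max (count_list w ` S)"
    using assms(1,2) by simp
  moreover have "0 < count_list w j"
    using assms(3) by (simp add: count_list_pos_iff)
  ultimately show ?thesis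
    by linarith
qed

lemma ml_choice_eq_hd_filter_Max:
  assumes "\<exists>j\<in>set (\<sigma> v). j \<in> set w"
  shows "ml_choice w v \<sigma>
           = hd (filter (\<lambda>j. count_list w j = Max (count_list w ` set (\<sigma> v))) (\<sigma> v))"
proof -
  let ?c = "count_list w" and ?M = "Max (count_list w ` set (\<sigma> v))"
  obtain j where j: "j \<in> set (\<sigma> v)" "j \<in> set w"
    using assms by blast
  then have "0 < ?c j"
    by (simp add: count_list_pos_iff)
  then have Max_eq: "Max (set (map ?c (filter (\<lambda>j. 0 < ?c j) (\<sigma> v)))) = ?M"
    unfolding set_map set_filter by (rule Max_image_positive[OF finite_set j(1)])
  have "0 < ?M"
    using Max_count_list_pos[OF finite_set j] .
  then have "\<And>i. (0 < ?c i \<and> ?c i = ?M) = (?c i = ?M)"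
    by auto
  then have "filter (\<lambda>j. ?c j = ?M) (filter (\<lambda>j. 0 < ?c j) (\<sigma> v)) = filter (\<lambda>j. ?c j = ?M) (\<sigma> v)"
    by (simp add: filter_filter)
  then show ?thesis
    unfolding ml_choice_def Let_def Max_eq by (rule arg_cong)
qed

lemma ml_choice_mem:
  assumes \<sigma>: "set (\<sigma> v) = {j. E v j}" and "\<exists>u\<in>set w. E v u"
  shows "ml_choice w v \<sigma> \<in> set w \<and> E v (ml_choice w v \<sigma>)"
proof -
  let ?c = "count_list w" and ?M = "Max (count_list w ` set (\<sigma> v))"
  obtain j where j: "j \<in> set (\<sigma> v)" "j \<in> set w"
    using assms by auto
  then have ex: "\<exists>j\<in>set (\<sigma> v). j \<in> set w"
    by blast
  have "?M \<in> ?c ` set (\<sigma> v)"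
    using j(1) by (intro Max_in) auto
  then have "filter (\<lambda>j. ?c j = ?M) (\<sigma> v) \<noteq> []"
    by (auto simp: filter_empty_conv)
  then have "ml_choice w v \<sigma> \<in> set (filter (\<lambda>j. ?c j = ?M) (\<sigma> v))"
    unfolding ml_choice_eq_hd_filter_Max[of \<sigma> v w, OF ex] by (rule hd_in_set)
  then have "ml_choice w v \<sigma> \<in> set (\<sigma> v)" "?c (ml_choice w v \<sigma>) = ?M"
    by auto
  moreover have "0 < ?M"
    using Max_count_list_pos[OF finite_set j] .
  ultimately show ?thesis
    using \<sigma> by (auto simp: count_list_pos_iff[symmetric])
qed

lemma Max_add_indicator_at_Max:
  fixes f g :: "'a \<Rightarrow> nat"
  assumes "finite S" "x \<in> S" "f x = Max (f ` S)"
    and g: "\<And>j. g j = f j + (if j = x then 1 else 0)" and "j \<in> S"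
  shows "g j = Max (g ` S) \<longleftrightarrow> j = x"
proof -
  have "Max (g ` S) = Suc (f x)"
  proof (rule Max_eqI)
    show "y \<le> Suc (f x)" if y: "y \<in> g ` S" for y
    proof -
      obtain i where "i \<in> S" "y = g i"
        using y by blast
      moreover have "f i \<le> f x"
        using assms(1,3) \<open>i \<in> S\<close> by simp
      ultimately show ?thesis
        by (simp add: g)
    qed
    show "Suc (f x) \<in> g ` S"
      using assms(2) g[of x] by force
  qed (use assms in simp)
  moreover have "f j \<le> f x"
    using assms by simp
  ultimately show ?thesis
    by (simp add: g)
qed

lemma Max_add_indicator_not_at_Max:
  fixes f g :: "'a \<Rightarrow> nat"
  assumes "finite S" "S \<noteq> {}" "\<not> (x \<in> S \<and> f x = Max (f ` S))"
    and g: "\<And>j. g j = f j + (if j = x then 1 else 0)"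
  shows "Max (g ` S) = Max (f ` S)"
proof (rule Max_eqI)
  show "y \<le> Max (f ` S)" if y: "y \<in> g ` S" for y
  proof -
    obtain j where "j \<in> S" "y = g j"
      using y by blast
    moreover have "f j \<le> Max (f ` S)"
      using assms(1) \<open>j \<in> S\<close> by simp
    ultimately show ?thesis
      using assms(3) by (cases "j = x") (auto simp: g)
  qed
  have "Max (f ` S) \<in> f ` S"
    using assms(1,2) by simp
  then obtain j where "j \<in> S" "f j = Max (f ` S)"
    by force
  with assms(3) show "Max (f ` S) \<in> g ` S"
    by (metis add_0_right g image_eqI)
qed (use assms in simp)

lemma ml_choice_add_mset:
  assumes "set (\<sigma> v) = {j. E v j}" "\<exists>u\<in>set B. E v u" "mset A = add_mset x (mset B)"
  shows "ml_choice A v \<sigma> = ml_choice B v \<sigma> \<or> ml_choice A v \<sigma> = x"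
proof -
  let ?S = "set (\<sigma> v)" and ?a = "count_list A" and ?b = "count_list B"
  let ?fA = "filter (\<lambda>j. ?a j = Max (?a ` ?S)) (\<sigma> v)"
  note ab = count_list_if_add_mset[OF assms(3)]
  have pos_B: "\<exists>j\<in>?S. j \<in> set B"
    using assms(1,2) by auto
  then have pos_A: "\<exists>j\<in>?S. j \<in> set A"
    using assms(3) by (metis set_mset_add_mset_insert set_mset_mset insertCI)
  show ?thesis
  proof (cases "x \<in> ?S \<and> ?b x = Max (?b ` ?S)")
    case True
    note argmax = Max_add_indicator_at_Max[of ?S x ?b ?a, OF finite_set _ _ ab]
    have "?fA \<noteq> []" "\<forall>j\<in>set ?fA. j = x"
      using True argmax by (auto simp: filter_empty_conv)
    then have "hd ?fA = x"
      using hd_in_set by blast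
    then show ?thesis
      using ml_choice_eq_hd_filter_Max[of \<sigma> v A, OF pos_A] by simp
  next
    case False
    have "?S \<noteq> {}"
      using pos_B by auto
    then have Max_eq: "Max (?a ` ?S) = Max (?b ` ?S)"
      by (rule Max_add_indicator_not_at_Max[OF finite_set _ False ab])
    have "Max (?b ` ?S) \<in> ?b ` ?S"
      using \<open>?S \<noteq> {}\<close> by simp
    then obtain j where "j \<in> ?S" "?b j = Max (?b ` ?S)"
      by (metis imageE)
    then have "hd ?fA = hd (filter (\<lambda>j. ?b j = Max (?b ` ?S)) (\<sigma> v)) \<or> hd ?fA = x"
      unfolding Max_eq using False by (intro hd_filter_mono_insert) (auto simp: ab)
    then show ?thesis
      using ml_choice_eq_hd_filter_Max[of \<sigma> v A, OF pos_A] ml_choice_eq_hd_filter_Max[of \<sigma> v B, OF pos_B]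
      by simp
  qed
qed

definition near :: "policy \<Rightarrow> 'a list \<Rightarrow> 'a list \<Rightarrow> bool" where
  "near \<phi> = (if \<phi> \<in> {FCFM, LCFM} then near_word else near_mset)"

lemma near_Cons: "near \<phi> (x # w) w"
proof -
  have "near_word (x # w) w"
    by (simp add: near_word_def one_deletion_Cons)
  then show ?thesis
    by (simp add: near_def near_mset_if_near_word)
qed

lemma length_le_Suc_if_near: "near \<phi> A B \<Longrightarrow> length A \<le> Suc (length B)"
  unfolding near_def using near_mset_if_near_word length_le_Suc_if_near_mset
  by (auto split: if_splits)

lemma near_step:
  assumes \<sigma>: "set (\<sigma> v) = {j. E v j}" and "near \<phi> A B"
  shows "near \<phi> (step E \<phi> A v \<sigma>) (step E \<phi> B v \<sigma>)"
proof (cases \<phi>)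
  case FCFM
  with assms(2) have "near_word A B"
    by (simp add: near_def)
  then have "near_word (delete_or_append (del_first (E v)) (E v) v A)
                       (delete_or_append (del_first (E v)) (E v) v B)"
    by (rule near_word_delete_or_append) (auto intro: one_deletion_del_first_both del_first_eq_of_one_deletion)
  with FCFM show ?thesis
    by (simp add: near_def step_FCFM)
next
  case LCFM
  with assms(2) have "near_word A B"
    by (simp add: near_def)
  then have "near_word (delete_or_append (del_last (E v)) (E v) v A)
                       (delete_or_append (del_last (E v)) (E v) v B)"
    by (rule near_word_delete_or_append) (auto intro: one_deletion_del_last_both del_last_eq_of_one_deletion)
  with LCFM show ?thesis
    by (simp add: near_def step_LCFM)
next
  case RandomPolicy
  with assms(2) have "near_mset A B"
    by (simp add: near_def)
  then have "near_mset (delete_or_append (\<lambda>w. remove1 (random_choice w v \<sigma>) w) (E v) v A)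
                       (delete_or_append (\<lambda>w. remove1 (random_choice w v \<sigma>) w) (E v) v B)"
  proof (rule near_mset_delete_or_append)
    show "random_choice A' v \<sigma> = random_choice B' v \<sigma>" if "mset A' = mset B'" for A' B'
      unfolding random_choice_def count_list_eq_if_mset_eq[OF that] ..
  qed (use random_choice_add_mset[of \<sigma> v E, OF \<sigma>] random_choice_mem[of \<sigma> v E, OF \<sigma>] in blast)+
  with RandomPolicy show ?thesis
    by (simp add: near_def step_RandomPolicy)
next
  case MatchLongest
  with assms(2) have "near_mset A B"
    by (simp add: near_def)
  then have "near_mset (delete_or_append (\<lambda>w. remove1 (ml_choice w v \<sigma>) w) (E v) v A)
                       (delete_or_append (\<lambda>w. remove1 (ml_choice w v \<sigma>) w) (E v) v B)"
  proof (rule near_mset_delete_or_append)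
    show "ml_choice A' v \<sigma> = ml_choice B' v \<sigma>" if "mset A' = mset B'" for A' B'
      unfolding ml_choice_def count_list_eq_if_mset_eq[OF that] ..
  qed (use ml_choice_add_mset[of \<sigma> v E, OF \<sigma>] ml_choice_mem[of \<sigma> v E, OF \<sigma>] in blast)+
  with MatchLongest show ?thesis
    by (simp add: near_def step_MatchLongest)
qed

theorem mainTheorem6:
  fixes V :: "'a set" and E :: "'a \<Rightarrow> 'a \<Rightarrow> bool" and \<phi> :: policy
    and z' z'' :: "'a list" and ss' ss'' :: "('a \<Rightarrow> 'a list) list"
  assumes "simple_connected_graph V E"
    and "set z' \<subseteq> V" and "set z'' \<subseteq> V"
    and "set ss' \<subseteq> prefs V E" and "set ss'' \<subseteq> prefs V E"
    and "length ss' = length z'" and "length ss'' = length z''"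
  shows "length (Q E \<phi> (z' @ z'') (ss' @ ss''))
           \<le> length (Q E \<phi> z' ss') + length (Q E \<phi> z'' ss'')"
proof -
  let ?g = "\<lambda>(v, \<sigma>) w. step E \<phi> w v \<sigma>"
  have Q_append: "Q E \<phi> (z' @ z'') (ss' @ ss'') = fold ?g (zip z'' ss'') (Q E \<phi> z' ss')"
    using assms(6) by (simp add: Q_def)
  have "set (\<sigma> v) = {j. E v j}" if "(v, \<sigma>) \<in> set (zip z'' ss'')" for v \<sigma>
  proof -
    have "v \<in> V" "\<sigma> \<in> prefs V E"
      using that assms(3,5) by (auto dest: set_zip_leftD set_zip_rightD)
    then show ?thesis
      unfolding prefs_def by blast
  qed
  then have "length (fold ?g (zip z'' ss'') (Q E \<phi> z' ss'))
               \<le> length (Q E \<phi> z' ss') + length (fold ?g (zip z'' ss'') [])"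
    by (intro length_fold_le_of_simulation[where R = "near \<phi>"])
      (auto intro: near_step near_Cons length_le_Suc_if_near)
  then show ?thesis
    unfolding Q_append by (simp add: Q_def)
qed

end
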